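(* Let $T$ be a binary search tree whose nodes are labelled with integers in $\{1,\dots,t\}$ so that no node has an ancestor with a label greater than its own label. For $j \in \{1,\dots,t\}$, let $L_j$ be the set of nodes with label $j$. Assume $|L_j| = 2^{2^j}$ for $j<t$ and $|L_t| \le 2^{2^t}$. Assume also that every maximal connected subtree $T'$ of $T$ consisting of nodes of a single layer $L_j$ is balanced, in the sense that every node of $T'$ has depth within $T'$ at most $O(\lg |T'|)$ (for instance, $T'$ is a red-black tree). Then every node $x \in L_j$ has depth $O(2^j)$ in $T$.
   Context: $\lg x := \log_2(x+2)$. The maximal connected single-layer subtrees are called layer-subtrees. The constant in the balance condition is uniform over all layer-subtrees. *)

theory Defs
  imports Complex_Main "HOL-Library.Tree" "HOL-Library.Sublist"
begin

definition lg :: "real \<Rightarrow> real" where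
  "lg x = log 2 (x + 2)"

text \<open>Nodes of a tree are identified with their positions: paths from the root
  (False = go left, True = go right). The depth of a node is the length of its path.\<close>
fun subtree_at :: "'a tree \<Rightarrow> bool list \<Rightarrow> 'a tree" where
  "subtree_at t [] = t"
| "subtree_at Leaf (b # bs) = Leaf"
| "subtree_at (Node l x r) (b # bs) = subtree_at (if b then r else l) bs"

definition positions :: "'a tree \<Rightarrow> bool list set" where
  "positions t = {p. subtree_at t p \<noteq> Leaf}"

definition lab :: "('k \<times> nat) tree \<Rightarrow> bool list \<Rightarrow> nat" where
  "lab t p = snd (value (subtree_at t p))"

definition layer :: "('k \<times> nat) tree \<Rightarrow> nat \<Rightarrow> bool list set" where
  "layer t j = {p \<in> positions t. lab t p = j}"

definition is_layer_root :: "('k \<times> nat) tree \<Rightarrow> bool list \<Rightarrow> bool" where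
  "is_layer_root t r \<longleftrightarrow> r \<in> positions t \<and> (r = [] \<or> lab t (butlast r) \<noteq> lab t r)"

text \<open>The layer-subtree (maximal connected single-layer subtree) rooted at r.\<close>
definition layer_subtree :: "('k \<times> nat) tree \<Rightarrow> bool list \<Rightarrow> bool list set" where
  "layer_subtree t r = {p \<in> positions t. prefix r p \<and>
      (\<forall>q. prefix r q \<and> prefix q p \<longrightarrow> lab t q = lab t r)}"

end

theory Submission
  imports Defs
begin

text \<open>Every node p lies in the layer-subtree of its layer root r, the shallowest ancestor with the
  same label. Balance bounds the depth of p below r by c(2^j + 1), since a layer-subtree of layer j
  has at most 2^2^j nodes; the parent of r lies in a layer of smaller label. Induction on the depth
  then yields depth p \<le> (2 + 4c) 2^(lab p), because the bounds for the layers below sum to a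
  geometric series.\<close>

lemma subtree_at_Leaf [simp]: "subtree_at Leaf p = Leaf"
  by (cases p) auto

lemma subtree_at_append: "subtree_at t (p @ q) = subtree_at (subtree_at t p) q"
proof (induction p arbitrary: t)
  case (Cons b p)
  then show ?case by (cases t) auto
qed simp

lemma prefix_in_positions: "p \<in> positions t \<Longrightarrow> prefix q p \<Longrightarrow> q \<in> positions t"
  unfolding positions_def prefix_def by (auto simp: subtree_at_append)

lemma length_lt_height_if_subtree_at: "subtree_at t p \<noteq> Leaf \<Longrightarrow> length p < height t"
proof (induction p arbitrary: t)
  case (Cons b p)
  then show ?case by (cases t) (auto split: if_splits, fastforce+)
qed (auto simp: neq_Leaf_iff)

lemma finite_positions: "finite (positions t)"
proof (rule finite_subset)
  show "positions t \<subseteq> {p. set p \<subseteq> UNIV \<and> length p \<le> height t}"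
    using length_lt_height_if_subtree_at unfolding positions_def by fastforce
qed (rule finite_lists_length_le, simp)

lemma layer_subtree_subset_layer: "layer_subtree t r \<subseteq> layer t (lab t r)"
  unfolding layer_subtree_def layer_def by auto

lemma card_layer_subtree_le: "card (layer_subtree t r) \<le> card (layer t (lab t r))"
  by (rule card_mono[OF _ layer_subtree_subset_layer]) (simp add: layer_def finite_positions)

lemma lg_le_if_le_double_exp:
  assumes "0 \<le> x" and "x \<le> 2 ^ 2 ^ j"
  shows "lg x \<le> 2 ^ j + 1"
proof -
  have "(2::real) \<le> 2 ^ 2 ^ j"
    by (metis power_one_right one_le_numeral one_le_power power_increasing)
  then have "x + 2 \<le> 2 ^ (2 ^ j + 1)"
    using assms by simp
  then have "log 2 (x + 2) \<le> log 2 (2 ^ (2 ^ j + 1))"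
    using \<open>2 \<le> 2 ^ 2 ^ j\<close> assms by (intro log_mono) auto
  also have "\<dots> = 2 ^ j + 1"
    by (simp add: log_pow_cancel del: power_Suc power_add)
  finally show ?thesis
    unfolding lg_def .
qed

lemma layer_root_exists:
  assumes mono: "\<forall>p\<in>positions t. \<forall>q. strict_prefix q p \<longrightarrow> lab t q \<le> lab t p"
    and p: "p \<in> positions t"
  obtains r where "is_layer_root t r" "p \<in> layer_subtree t r" "lab t r = lab t p"
proof -
  have mono': "lab t q \<le> lab t p'" if "p' \<in> positions t" "prefix q p'" for p' q
    using mono that by (cases "q = p'") (auto simp: strict_prefix_def)
  define P where "P k \<longleftrightarrow> lab t (take k p) = lab t p" for k
  define k where "k = (LEAST k. P k)"
  have "P (length p)"
    by (simp add: P_def)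
  then have Pk: "P k" and k_le: "k \<le> length p"
    unfolding k_def by (auto intro: LeastI Least_le)
  define r where "r = take k p"
  have rp: "prefix r p"
    by (simp add: r_def take_is_prefix)
  have r_pos: "r \<in> positions t"
    using prefix_in_positions[OF p rp] .
  have lab_r: "lab t r = lab t p"
    using Pk by (simp add: P_def r_def)
  have "lab t (butlast r) \<noteq> lab t r" if "r \<noteq> []"
  proof -
    have "butlast r = take (k - 1) p" and "k - 1 < k"
      using that k_le by (auto simp: r_def butlast_take)
    then show ?thesis
      using not_less_Least[of "k - 1" P] lab_r by (simp add: k_def P_def)
  qed
  then have "is_layer_root t r"
    using r_pos by (auto simp: is_layer_root_def)
  moreover have "p \<in> layer_subtree t r"
    unfolding layer_subtree_def
  proof (intro CollectI conjI allI impI)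
    fix q assume q: "prefix r q \<and> prefix q p"
    then have "lab t r \<le> lab t q" "lab t q \<le> lab t p"
      using mono' prefix_in_positions[OF p] p by blast+
    then show "lab t q = lab t r"
      using lab_r by simp
  qed (use p rp in auto)
  ultimately show ?thesis
    using lab_r that by blast
qed

lemma geometric_step:
  fixes c :: real
  assumes "0 \<le> c" and "0 < j"
  shows "(2 + 4 * c) * 2 ^ (j - 1) + 1 + c * (2 ^ j + 1) \<le> (2 + 4 * c) * 2 ^ j"
proof -
  obtain i where j: "j = Suc i"
    using \<open>0 < j\<close> gr0_implies_Suc by blast
  have "1 \<le> (2::real) ^ i" "c \<le> c * 2 ^ i"
    using \<open>0 \<le> c\<close> by (simp_all add: mult_le_cancel_left1)
  moreover have "(2 + 4 * c) * 2 ^ j - ((2 + 4 * c) * 2 ^ (j - 1) + 1 + c * (2 ^ j + 1))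
      = 2 * 2 ^ i + 2 * (c * 2 ^ i) - 1 - c"
    by (simp add: j algebra_simps)
  ultimately show ?thesis
    using \<open>0 \<le> c\<close> by linarith
qed

lemma depth_le_exp_lab:
  fixes c :: real
  assumes "0 \<le> c"
    and mono: "\<forall>p\<in>positions t. \<forall>q. strict_prefix q p \<longrightarrow> lab t q \<le> lab t p"
    and layer_depth: "\<And>r p. is_layer_root t r \<Longrightarrow> p \<in> layer_subtree t r \<Longrightarrow>
          real (length p - length r) \<le> c * (2 ^ lab t r + 1)"
    and "p \<in> positions t"
  shows "real (length p) \<le> (2 + 4 * c) * 2 ^ lab t p"
  using \<open>p \<in> positions t\<close>
proof (induction p rule: measure_induct_rule[of length])
  case (less p)
  define j where "j = lab t p"
  obtain r where root: "is_layer_root t r" and p_in: "p \<in> layer_subtree t r"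
    and lab_r: "lab t r = j"
    using layer_root_exists[OF mono less.prems] j_def by metis
  have "length r \<le> length p"
    using p_in by (auto simp: layer_subtree_def prefix_length_le)
  then have below_r: "real (length p) \<le> real (length r) + c * (2 ^ j + 1)"
    using layer_depth[OF root p_in] lab_r by (simp add: of_nat_diff)
  show ?case
  proof (cases "r = []")
    case True
    have "c \<le> c * 2 ^ j" "0 \<le> c * 2 ^ j" "(0::real) \<le> 2 ^ j"
      using \<open>0 \<le> c\<close> by (simp_all add: mult_le_cancel_left1)
    then have "c * (2 ^ j + 1) \<le> (2 + 4 * c) * 2 ^ j"
      by (simp only: ring_distribs mult.assoc)
    then show ?thesis
      using below_r True by (simp add: j_def)
  next
    case False
    then obtain q b where r: "r = q @ [b]"
      by (metis rev_exhaust)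
    have r_pos: "r \<in> positions t"
      using root by (simp add: is_layer_root_def)
    have q_pos: "q \<in> positions t"
      using prefix_in_positions[OF r_pos] r by simp
    have "strict_prefix q r"
      by (simp add: r strict_prefix_def)
    then have "lab t q \<le> j" "lab t q \<noteq> j"
      using mono r_pos root lab_r by (auto simp: r is_layer_root_def)
    then have "0 < j" "lab t q \<le> j - 1"
      by auto
    have "length q < length p"
      using \<open>length r \<le> length p\<close> r by simp
    then have "real (length q) \<le> (2 + 4 * c) * 2 ^ lab t q"
      using less.IH q_pos by blast
    also have "\<dots> \<le> (2 + 4 * c) * 2 ^ (j - 1)"
      using \<open>0 \<le> c\<close> \<open>lab t q \<le> j - 1\<close> by (intro mult_left_mono power_increasing) auto
    finally have "real (length p) \<le> (2 + 4 * c) * 2 ^ (j - 1) + 1 + c * (2 ^ j + 1)"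
      using below_r r by simp
    also have "\<dots> \<le> (2 + 4 * c) * 2 ^ j"
      using geometric_step[OF \<open>0 \<le> c\<close> \<open>0 < j\<close>] .
    finally show ?thesis
      by (simp add: j_def)
  qed
qed

theorem lemma1:
  shows "\<forall>c::real. \<exists>C::real. \<forall>(T :: ('k::linorder \<times> nat) tree) (t::nat).
    bst_wrt (\<lambda>x y. fst x < fst y) T
    \<and> (\<forall>p\<in>positions T. 1 \<le> lab T p \<and> lab T p \<le> t)
    \<and> (\<forall>p\<in>positions T. \<forall>q. strict_prefix q p \<longrightarrow> lab T q \<le> lab T p)
    \<and> (\<forall>j. 1 \<le> j \<and> j < t \<longrightarrow> card (layer T j) = 2 ^ (2 ^ j))
    \<and> card (layer T t) \<le> 2 ^ (2 ^ t)
    \<and> (\<forall>r. is_layer_root T r \<longrightarrow> (\<forall>p\<in>layer_subtree T r.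
          real (length p - length r) \<le> c * lg (real (card (layer_subtree T r)))))
    \<longrightarrow> (\<forall>p\<in>positions T. real (length p) \<le> C * 2 ^ (lab T p))"
proof (intro allI exI impI ballI)
  fix c :: real and T :: "('k \<times> nat) tree" and t p
  assume H: "bst_wrt (\<lambda>x y. fst x < fst y) T
    \<and> (\<forall>p\<in>positions T. 1 \<le> lab T p \<and> lab T p \<le> t)
    \<and> (\<forall>p\<in>positions T. \<forall>q. strict_prefix q p \<longrightarrow> lab T q \<le> lab T p)
    \<and> (\<forall>j. 1 \<le> j \<and> j < t \<longrightarrow> card (layer T j) = 2 ^ (2 ^ j))
    \<and> card (layer T t) \<le> 2 ^ (2 ^ t)
    \<and> (\<forall>r. is_layer_root T r \<longrightarrow> (\<forall>p\<in>layer_subtree T r.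
          real (length p - length r) \<le> c * lg (real (card (layer_subtree T r)))))"
    and "p \<in> positions T"
  have "real (length q - length r) \<le> max c 0 * (2 ^ lab T r + 1)"
    if root: "is_layer_root T r" and q: "q \<in> layer_subtree T r" for r q
  proof -
    have "card (layer T (lab T r)) \<le> 2 ^ 2 ^ lab T r"
      using H root by (cases "lab T r < t") (auto simp: is_layer_root_def)
    then have "real (card (layer_subtree T r)) \<le> 2 ^ 2 ^ lab T r"
      using card_layer_subtree_le[of T r] by (metis le_trans of_nat_le_iff of_nat_numeral of_nat_power)
    then have lg_le: "lg (real (card (layer_subtree T r))) \<le> 2 ^ lab T r + 1"
      by (intro lg_le_if_le_double_exp) simp_all
    have "real (length q - length r) \<le> c * lg (real (card (layer_subtree T r)))"
      using H root q by blast
    also have "\<dots> \<le> max c 0 * lg (real (card (layer_subtree T r)))"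
      by (intro mult_right_mono) (simp_all add: lg_def)
    also have "\<dots> \<le> max c 0 * (2 ^ lab T r + 1)"
      using lg_le by (intro mult_left_mono) simp_all
    finally show ?thesis .
  qed
  then show "real (length p) \<le> (2 + 4 * max c 0) * 2 ^ lab T p"
    using depth_le_exp_lab[of "max c 0" T] H \<open>p \<in> positions T\<close> by auto
qed

end
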